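(* Let $(G,+)$ be a Polish group and let $P \subseteq G$ be a perfect set. Then there is a perfect set $Q \subseteq P$ which is skew.
   Context: The group $(G,+)$ is written additively (not necessarily abelian), with $x-y=x+(-y)$. A set is perfect if it is closed and has no isolated points. A set $Z \subseteq G$ is skew if for all $x,y,v,w\in Z$: if $x\neq y$, $v\neq w$ and $\{x,y\}\neq\{v,w\}$, then $x-y\neq v-w$. *)

theory Defs
  imports "HOL-Analysis.Analysis"
begin

definition Polish_space :: "'a topology \<Rightarrow> bool" where
  "Polish_space X \<longleftrightarrow> completely_metrizable_space X \<and> separable_space X"

definition polish_group :: "'a::{topological_space, group_add} itself \<Rightarrow> bool" where
  "polish_group _ \<longleftrightarrow> Polish_space (euclidean :: 'a topology)
     \<and> continuous_on (UNIV :: ('a \<times> 'a) set) (\<lambda>p. fst p + snd p)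
     \<and> continuous_on (UNIV :: 'a set) uminus"

definition perfect_set :: "'a::topological_space set \<Rightarrow> bool" where
  "perfect_set P \<longleftrightarrow> closed P \<and> (\<forall>x\<in>P. x islimpt P)"

definition skew :: "'a::group_add set \<Rightarrow> bool" where
  "skew Z \<longleftrightarrow> (\<forall>x\<in>Z. \<forall>y\<in>Z. \<forall>v\<in>Z. \<forall>w\<in>Z.
      x \<noteq> y \<and> v \<noteq> w \<and> {x, y} \<noteq> {v, w} \<longrightarrow> x - y \<noteq> v - w)"

end

theory Submission
  imports Defs
begin

text \<open>
  Fix a complete metric \<open>d\<close> inducing the topology. Inside \<open>P\<close> we build a binary tree of closed
  balls \<open>cell s\<close>, indexed by finite 0-1 words, with radius at most \<open>2^-|s|\<close> and
  \<open>cell (s @ [b]) \<subseteq> cell s\<close>, such that at every level \<open>n\<close> each choice of one point from each of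
  the \<open>2^n\<close> cells is injective and has skew range. The set of points lying in a cell of every
  level is then closed, perfect (sibling cells are disjoint and shrink), nonempty by completeness,
  and skew, since any four of its points are separated by the cells of a deep enough level.

  A level is obtained from the previous one by shrinking the balls around the children of each cell
  so as to satisfy the finitely many constraints \<open>x - y \<noteq> v - w\<close> one after another. Each constraint
  is open by continuity of subtraction, and dense because one of its four indices occurs only once:
  moving that single point, which is possible as \<open>P\<close> is perfect, destroys any solution of the
  equation, even in a non-abelian group.
\<close>

definition distinct_pairs :: "'a \<Rightarrow> 'a \<Rightarrow> 'a \<Rightarrow> 'a \<Rightarrow> bool" where
  "distinct_pairs x y v w \<longleftrightarrow> x \<noteq> y \<and> v \<noteq> w \<and> {x, y} \<noteq> {v, w}"

text \<open>The quadruples \<open>(s, s', s', s')\<close> express injectivity as a constraint of the same shape.\<close>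
definition skew_constraints :: "'i set \<Rightarrow> ('i \<times> 'i \<times> 'i \<times> 'i) set" where
  "skew_constraints T = {(s1, s2, s3, s4). s1 \<in> T \<and> s2 \<in> T \<and> s3 \<in> T \<and> s4 \<in> T \<and>
     (distinct_pairs s1 s2 s3 s4 \<or> s1 \<noteq> s2 \<and> s3 = s2 \<and> s4 = s2)}"

lemma finite_skew_constraints: "finite T \<Longrightarrow> finite (skew_constraints T)"
  by (rule finite_subset[of _ "T \<times> T \<times> T \<times> T"]) (auto simp: skew_constraints_def)

lemma skewD:
  "skew Z \<Longrightarrow> x \<in> Z \<Longrightarrow> y \<in> Z \<Longrightarrow> v \<in> Z \<Longrightarrow> w \<in> Z \<Longrightarrow> x \<noteq> y \<Longrightarrow> v \<noteq> w \<Longrightarrow> {x, y} \<noteq> {v, w} \<Longrightarrow>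
    x - y \<noteq> v - w"
  unfolding skew_def by blast

lemma skew_constraints_imp_inj_skew:
  fixes \<phi> :: "'i \<Rightarrow> 'a::group_add"
  assumes "\<forall>(s1, s2, s3, s4)\<in>skew_constraints T. \<phi> s1 - \<phi> s2 \<noteq> \<phi> s3 - \<phi> s4"
  shows "inj_on \<phi> T \<and> skew (\<phi> ` T)"
proof
  show "inj_on \<phi> T"
  proof (rule inj_onI, rule ccontr)
    fix s s' assume "s \<in> T" "s' \<in> T" "\<phi> s = \<phi> s'" "s \<noteq> s'"
    then have "(s, s', s', s') \<in> skew_constraints T" by (simp add: skew_constraints_def)
    with assms \<open>\<phi> s = \<phi> s'\<close> show False by auto
  qed
  show "skew (\<phi> ` T)"
    unfolding skew_def
  proof (clarsimp)
    fix a b e f assume abef: "a \<in> T" "b \<in> T" "e \<in> T" "f \<in> T"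
      and pairs: "\<phi> a \<noteq> \<phi> b" "\<phi> e \<noteq> \<phi> f" "{\<phi> a, \<phi> b} \<noteq> {\<phi> e, \<phi> f}"
      and eq: "\<phi> a - \<phi> b = \<phi> e - \<phi> f"
    from pairs have "distinct_pairs a b e f" by (auto simp: distinct_pairs_def)
    with abef have "(a, b, e, f) \<in> skew_constraints T" by (simp add: skew_constraints_def)
    with assms eq show False by auto
  qed
qed

lemma skew_constraint_breakable:
  assumes "(s1, s2, s3, s4) \<in> skew_constraints T"
  obtains u where "u \<in> T"
    and "\<And>(\<phi> :: 'i \<Rightarrow> 'a::group_add) y. \<phi> s1 - \<phi> s2 = \<phi> s3 - \<phi> s4 \<Longrightarrow> y \<noteq> \<phi> u \<Longrightarrow>
           (\<phi>(u := y)) s1 - (\<phi>(u := y)) s2 \<noteq> (\<phi>(u := y)) s3 - (\<phi>(u := y)) s4"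
proof -
  have in_T: "s1 \<in> T" "s2 \<in> T" "s3 \<in> T" "s4 \<in> T"
    using assms by (auto simp: skew_constraints_def)
  have "s1 \<notin> {s2, s3, s4} \<or> s2 \<notin> {s1, s3, s4} \<or> s3 \<notin> {s1, s2, s4} \<or> s4 \<notin> {s1, s2, s3}"
    using assms unfolding skew_constraints_def distinct_pairs_def by blast
  then show thesis
  proof (elim disjE)
    assume "s1 \<notin> {s2, s3, s4}"
    then show thesis by (intro that[OF in_T(1)]) (auto simp: diff_eq_eq)
  next
    assume "s2 \<notin> {s1, s3, s4}"
    then show thesis by (intro that[OF in_T(2)]) (simp; metis diff_left_imp_eq)
  next
    assume "s3 \<notin> {s1, s2, s4}"
    then show thesis by (intro that[OF in_T(3)]) (auto simp: eq_diff_eq)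
  next
    assume "s4 \<notin> {s1, s2, s3}"
    then show thesis by (intro that[OF in_T(4)]) (simp; metis diff_left_imp_eq)
  qed
qed

lemma (in Metric_space) eventually_separated_by_powers:
  assumes "finite S" "S \<subseteq> M"
  shows "\<forall>\<^sub>F n in sequentially. \<forall>a\<in>S. \<forall>b\<in>S. a \<noteq> b \<longrightarrow> (1/2::real) ^ n < d a b"
proof -
  have "\<forall>\<^sub>F n in sequentially. (1/2::real) ^ n < d a b" if "a \<in> S" "b \<in> S" "a \<noteq> b" for a b
  proof -
    have "0 < d a b"
      using that assms by (simp add: subset_iff)
    then show ?thesis
      using order_tendstoD(2)[OF LIMSEQ_power_zero[of "1/2::real"]] by simp
  qed
  then show ?thesis
    using assms by (auto intro!: eventually_ball_finite)
qed

locale complete_metric_group = Metric_space "UNIV :: 'a set" d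
  for d :: "'a::{topological_space, group_add} \<Rightarrow> 'a \<Rightarrow> real" +
  assumes mtopology_eq_euclidean: "mtopology = euclidean"
    and mcomplete_UNIV: "mcomplete"
    and continuous_on_diff: "continuous_on UNIV (\<lambda>p::'a \<times> 'a. fst p - snd p)"
begin

lemma eventually_nhds_iff_ball: "eventually Q (nhds x) \<longleftrightarrow> (\<exists>r>0. \<forall>y. d x y < r \<longrightarrow> Q y)"
proof
  assume "eventually Q (nhds x)"
  then obtain S where "open S" "x \<in> S" "\<forall>y\<in>S. Q y"
    by (auto simp: eventually_nhds)
  moreover from \<open>open S\<close> have "openin mtopology S"
    by (simp add: mtopology_eq_euclidean)
  ultimately show "\<exists>r>0. \<forall>y. d x y < r \<longrightarrow> Q y"
    by (force simp: openin_mtopology)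
next
  assume "\<exists>r>0. \<forall>y. d x y < r \<longrightarrow> Q y"
  then obtain r where "0 < r" "\<forall>y\<in>mball x r. Q y"
    by auto
  moreover have "open (mball x r)"
    using openin_mball[of x r] by (simp add: mtopology_eq_euclidean)
  ultimately show "eventually Q (nhds x)"
    by (auto simp: eventually_nhds intro!: exI[of _ "mball x r"])
qed

lemma diff_in_open_near:
  assumes "open U" "a - b \<in> U"
  shows "\<exists>r>0. \<forall>a' b'. d a a' < r \<longrightarrow> d b b' < r \<longrightarrow> a' - b' \<in> U"
proof -
  have "open ((\<lambda>p::'a \<times> 'a. fst p - snd p) -` U)"
    using continuous_on_diff assms(1) by (simp add: continuous_on_open_vimage)
  then have "\<forall>\<^sub>F p in nhds (a, b). p \<in> (\<lambda>p. fst p - snd p) -` U"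
    using assms(2) by (intro eventually_nhds_in_open) auto
  then have "\<forall>\<^sub>F p in nhds a \<times>\<^sub>F nhds b. fst p - snd p \<in> U"
    by (simp add: nhds_prod)
  then obtain Qa Qb where "eventually Qa (nhds a)" "eventually Qb (nhds b)"
      and Q: "\<And>a' b'. Qa a' \<Longrightarrow> Qb b' \<Longrightarrow> a' - b' \<in> U"
    by (auto simp: eventually_prod_filter)
  then obtain ra rb where "0 < ra" "\<forall>y. d a y < ra \<longrightarrow> Qa y" "0 < rb" "\<forall>y. d b y < rb \<longrightarrow> Qb y"
    by (auto simp: eventually_nhds_iff_ball)
  with Q show ?thesis
    by (intro exI[of _ "min ra rb"]) auto
qed

lemma diff_neq_near:
  assumes "a - b \<noteq> e - f"
  shows "\<exists>\<epsilon>>0. \<forall>a' b' e' f'. d a a' < \<epsilon> \<longrightarrow> d b b' < \<epsilon> \<longrightarrow> d e e' < \<epsilon> \<longrightarrow> d f f' < \<epsilon> \<longrightarrow>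
           a' - b' \<noteq> e' - f'"
proof -
  have "Hausdorff_space (euclidean :: 'a topology)"
    using Hausdorff_space_mtopology by (simp add: mtopology_eq_euclidean)
  then obtain U V where "open U" "open V" "a - b \<in> U" "e - f \<in> V" "U \<inter> V = {}"
    using assms unfolding Hausdorff_space_def disjnt_def
    by (metis UNIV_I open_openin topspace_euclidean)
  moreover obtain r1 where "0 < r1" "\<forall>a' b'. d a a' < r1 \<longrightarrow> d b b' < r1 \<longrightarrow> a' - b' \<in> U"
    using diff_in_open_near \<open>open U\<close> \<open>a - b \<in> U\<close> by blast
  moreover obtain r2 where "0 < r2" "\<forall>e' f'. d e e' < r2 \<longrightarrow> d f f' < r2 \<longrightarrow> e' - f' \<in> V"
    using diff_in_open_near \<open>open V\<close> \<open>e - f \<in> V\<close> by blast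
  ultimately show ?thesis
    by (intro exI[of _ "min r1 r2"]) (auto simp: disjoint_iff; metis)
qed

end

lemma polish_group_complete_metric_group:
  assumes "polish_group TYPE('a::{topological_space, group_add})"
  obtains d :: "'a::{topological_space, group_add} \<Rightarrow> 'a \<Rightarrow> real" where "complete_metric_group d"
proof -
  obtain M d where "Metric_space M (d :: 'a \<Rightarrow> 'a \<Rightarrow> real)" "Metric_space.mcomplete M d"
    and topology: "Metric_space.mtopology M d = euclidean"
    using assms unfolding polish_group_def Polish_space_def completely_metrizable_space_def by metis
  moreover have "M = UNIV"
    using Metric_space.topspace_mtopology[OF \<open>Metric_space M d\<close>] topology by simp
  moreover have "continuous_on UNIV (\<lambda>p::'a \<times> 'a. fst p - snd p)"
  proof -
    have add: "continuous_on UNIV (\<lambda>p::'a \<times> 'a. fst p + snd p)"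
      and neg: "continuous_on UNIV (uminus :: 'a \<Rightarrow> 'a)"
      using assms by (simp_all add: polish_group_def)
    have "continuous_on UNIV (\<lambda>p::'a \<times> 'a. - snd p)"
      by (rule continuous_on_compose2[OF neg continuous_on_snd[OF continuous_on_id]]) simp
    then have "continuous_on UNIV (\<lambda>p::'a \<times> 'a. (fst p, - snd p))"
      by (rule continuous_on_Pair[OF continuous_on_fst[OF continuous_on_id]])
    then have "continuous_on UNIV ((\<lambda>p::'a \<times> 'a. fst p + snd p) \<circ> (\<lambda>p. (fst p, - snd p)))"
      by (rule continuous_on_compose) (rule continuous_on_subset[OF add], simp)
    then show ?thesis
      by (simp only: o_def fst_conv snd_conv diff_conv_add_uminus)
  qed
  ultimately show thesis
    by (intro that) (simp add: complete_metric_group_def complete_metric_group_axioms_def)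
qed

locale perfect_subset_complete_metric_group = complete_metric_group d
  for d :: "'a::{topological_space, group_add} \<Rightarrow> 'a \<Rightarrow> real" +
  fixes P :: "'a set"
  assumes perfect_P: "perfect_set P"
begin

lemma closed_P: "closed P"
  using perfect_P by (simp add: perfect_set_def)

lemma perfect_point_near:
  assumes "x \<in> P" "0 < r"
  shows "\<exists>y\<in>P. y \<noteq> x \<and> d x y < r"
proof -
  have "open (mball x r)"
    using openin_mball[of x r] by (simp add: mtopology_eq_euclidean)
  moreover have "x islimpt P"
    using perfect_P assms(1) by (simp add: perfect_set_def)
  ultimately show ?thesis
    using assms(2) by (fastforce elim: islimptE[of x P "mball x r"])
qed

definition product_ball :: "'i set \<Rightarrow> ('i \<Rightarrow> 'a) \<Rightarrow> ('i \<Rightarrow> real) \<Rightarrow> ('i \<Rightarrow> 'a) set" where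
  "product_ball T c r = {\<phi>. \<forall>t\<in>T. \<phi> t \<in> P \<and> d (c t) (\<phi> t) < r t}"

lemma center_in_product_ball: "\<forall>t\<in>T. c t \<in> P \<and> 0 < r t \<Longrightarrow> c \<in> product_ball T c r"
  by (simp add: product_ball_def)

lemma product_ball_cong:
  "(\<And>t. t \<in> T \<Longrightarrow> c t = c' t \<and> r t = r' t) \<Longrightarrow> product_ball T c r = product_ball T c' r'"
  by (simp add: product_ball_def)

lemma skew_constraint_dense:
  assumes "(s1, s2, s3, s4) \<in> skew_constraints T" "\<forall>t\<in>T. c t \<in> P \<and> 0 < r t"
  shows "\<exists>\<phi>\<in>product_ball T c r. \<phi> s1 - \<phi> s2 \<noteq> \<phi> s3 - \<phi> s4"
proof (cases "c s1 - c s2 = c s3 - c s4")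
  case True
  obtain u where "u \<in> T" and break: "\<And>(\<phi> :: _ \<Rightarrow> 'a) y. \<phi> s1 - \<phi> s2 = \<phi> s3 - \<phi> s4 \<Longrightarrow> y \<noteq> \<phi> u \<Longrightarrow>
           (\<phi>(u := y)) s1 - (\<phi>(u := y)) s2 \<noteq> (\<phi>(u := y)) s3 - (\<phi>(u := y)) s4"
    using skew_constraint_breakable[OF assms(1)] by metis
  obtain y where "y \<in> P" "y \<noteq> c u" "d (c u) y < r u"
    using perfect_point_near assms(2) \<open>u \<in> T\<close> by blast
  then have "c(u := y) \<in> product_ball T c r"
    using assms(2) by (simp add: product_ball_def)
  with break[OF True \<open>y \<noteq> c u\<close>] show ?thesis
    by blast
next
  case False
  then show ?thesis
    using center_in_product_ball[OF assms(2)] by blast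
qed

lemma skew_constraint_open:
  assumes "(s1, s2, s3, s4) \<in> skew_constraints T" "\<phi> s1 - \<phi> s2 \<noteq> \<phi> s3 - \<phi> s4"
  shows "\<exists>\<epsilon>>0. \<forall>\<psi>. (\<forall>t\<in>T. d (\<phi> t) (\<psi> t) < \<epsilon>) \<longrightarrow> \<psi> s1 - \<psi> s2 \<noteq> \<psi> s3 - \<psi> s4"
proof -
  have "s1 \<in> T" "s2 \<in> T" "s3 \<in> T" "s4 \<in> T"
    using assms(1) by (auto simp: skew_constraints_def)
  then show ?thesis
    using diff_neq_near[OF assms(2)] by (metis (no_types, lifting))
qed

lemma product_ball_mono:
  assumes "\<forall>t\<in>T. d (c t) (c' t) + r' t \<le> r t"
  shows "product_ball T c' r' \<subseteq> product_ball T c r"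
proof
  fix \<psi> assume \<psi>: "\<psi> \<in> product_ball T c' r'"
  have "d (c t) (\<psi> t) < r t" if "t \<in> T" for t
    using triangle[of "c t" "c' t" "\<psi> t"] assms \<psi> that by (fastforce simp: product_ball_def)
  with \<psi> show "\<psi> \<in> product_ball T c r"
    by (simp add: product_ball_def)
qed

lemma shrink_product_ball_to_skew_constraint:
  assumes "(s1, s2, s3, s4) \<in> skew_constraints T" "\<forall>t\<in>T. c t \<in> P \<and> 0 < r t"
  shows "\<exists>c' r'. (\<forall>t\<in>T. c' t \<in> P \<and> 0 < r' t \<and> d (c t) (c' t) + r' t \<le> r t) \<and>
           (\<forall>\<psi>\<in>product_ball T c' r'. \<psi> s1 - \<psi> s2 \<noteq> \<psi> s3 - \<psi> s4)"
proof -
  obtain \<phi> where \<phi>: "\<phi> \<in> product_ball T c r" "\<phi> s1 - \<phi> s2 \<noteq> \<phi> s3 - \<phi> s4"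
    using skew_constraint_dense[OF assms] by blast
  obtain \<epsilon> where "0 < \<epsilon>"
    and \<epsilon>: "\<forall>\<psi>. (\<forall>t\<in>T. d (\<phi> t) (\<psi> t) < \<epsilon>) \<longrightarrow> \<psi> s1 - \<psi> s2 \<noteq> \<psi> s3 - \<psi> s4"
    using skew_constraint_open[OF assms(1) \<phi>(2)] by blast
  define r' where "r' t = min \<epsilon> (r t - d (c t) (\<phi> t))" for t
  have "\<forall>t\<in>T. \<phi> t \<in> P \<and> 0 < r' t \<and> d (c t) (\<phi> t) + r' t \<le> r t"
    using \<phi>(1) \<open>0 < \<epsilon>\<close> by (auto simp: product_ball_def r'_def)
  moreover have "\<forall>\<psi>\<in>product_ball T \<phi> r'. \<psi> s1 - \<psi> s2 \<noteq> \<psi> s3 - \<psi> s4"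
    using \<epsilon> by (auto simp: product_ball_def r'_def)
  ultimately show ?thesis
    by blast
qed

lemma shrink_product_ball_to_skew_constraints:
  assumes "finite X" "X \<subseteq> skew_constraints T" "\<forall>t\<in>T. c0 t \<in> P \<and> 0 < r0 t"
  shows "\<exists>c r. (\<forall>t\<in>T. c t \<in> P \<and> 0 < r t \<and> d (c0 t) (c t) + r t \<le> r0 t) \<and>
           (\<forall>\<phi>\<in>product_ball T c r. \<forall>(s1, s2, s3, s4)\<in>X. \<phi> s1 - \<phi> s2 \<noteq> \<phi> s3 - \<phi> s4)"
  using assms(1,2)
proof (induction X rule: finite_induct)
  case empty
  show ?case
    using assms(3) by (intro exI[of _ c0] exI[of _ r0]) auto
next
  case (insert q X)
  obtain s1 s2 s3 s4 where q: "q = (s1, s2, s3, s4)"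
    by (cases q) auto
  obtain c r where cr: "\<forall>t\<in>T. c t \<in> P \<and> 0 < r t \<and> d (c0 t) (c t) + r t \<le> r0 t"
    and old: "\<forall>\<phi>\<in>product_ball T c r. \<forall>(s1, s2, s3, s4)\<in>X. \<phi> s1 - \<phi> s2 \<noteq> \<phi> s3 - \<phi> s4"
    using insert.IH insert.prems by blast
  have q_constraint: "(s1, s2, s3, s4) \<in> skew_constraints T"
    using insert.prems q by auto
  have "\<forall>t\<in>T. c t \<in> P \<and> 0 < r t"
    using cr by simp
  then obtain c' r' where cr': "\<forall>t\<in>T. c' t \<in> P \<and> 0 < r' t \<and> d (c t) (c' t) + r' t \<le> r t"
    and new: "\<forall>\<psi>\<in>product_ball T c' r'. \<psi> s1 - \<psi> s2 \<noteq> \<psi> s3 - \<psi> s4"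
    using shrink_product_ball_to_skew_constraint[OF q_constraint] by blast
  have "d (c0 t) (c' t) + r' t \<le> r0 t" if "t \<in> T" for t
    using triangle[of "c0 t" "c t" "c' t"] cr cr' that by fastforce
  with cr' have "\<forall>t\<in>T. c' t \<in> P \<and> 0 < r' t \<and> d (c0 t) (c' t) + r' t \<le> r0 t"
    by simp
  moreover have "\<forall>\<psi>\<in>product_ball T c' r'. \<forall>(s1, s2, s3, s4)\<in>X. \<psi> s1 - \<psi> s2 \<noteq> \<psi> s3 - \<psi> s4"
    using old product_ball_mono[of T c c' r' r] cr' by blast
  ultimately show ?case
    using new unfolding q by blast
qed

definition skew_level :: "nat \<Rightarrow> (bool list \<Rightarrow> 'a) \<Rightarrow> (bool list \<Rightarrow> real) \<Rightarrow> bool" where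
  "skew_level n c r \<longleftrightarrow>
     (\<forall>s\<in>{s. length s = n}. c s \<in> P \<and> 0 < r s \<and> r s \<le> (1/2) ^ n) \<and>
     (\<forall>\<phi>\<in>product_ball {s. length s = n} c r. \<forall>(s1, s2, s3, s4)\<in>skew_constraints {s. length s = n}.
        \<phi> s1 - \<phi> s2 \<noteq> \<phi> s3 - \<phi> s4)"

lemma skew_level_0: "p \<in> P \<Longrightarrow> skew_level 0 (\<lambda>_. p) (\<lambda>_. 1)"
  by (auto simp: skew_level_def skew_constraints_def distinct_pairs_def)

lemma skew_level_cong:
  "(\<And>s. length s = n \<Longrightarrow> c s = c' s \<and> r s = r' s) \<Longrightarrow> skew_level n c r = skew_level n c' r'"
  using product_ball_cong[of "{s. length s = n}" c c' r r'] by (simp add: skew_level_def)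

lemma skew_level_Suc:
  assumes "skew_level n c r"
  shows "\<exists>c' r'. skew_level (Suc n) c' r' \<and>
           (\<forall>s b. length s = n \<longrightarrow> d (c s) (c' (s @ [b])) + r' (s @ [b]) \<le> r s / 2)"
proof -
  let ?T = "{s :: bool list. length s = Suc n}"
  define c0 where "c0 t = c (butlast t)" for t
  define r0 where "r0 t = min (r (butlast t) / 2) ((1/2) ^ Suc n)" for t
  have "finite ?T"
    using finite_lists_length_eq[of "UNIV :: bool set" "Suc n"] by simp
  moreover have "\<forall>t\<in>?T. c0 t \<in> P \<and> 0 < r0 t"
    using assms by (simp add: skew_level_def c0_def r0_def)
  ultimately have "\<exists>c' r'. (\<forall>t\<in>?T. c' t \<in> P \<and> 0 < r' t \<and> d (c0 t) (c' t) + r' t \<le> r0 t) \<and>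
     (\<forall>\<phi>\<in>product_ball ?T c' r'. \<forall>(s1, s2, s3, s4)\<in>skew_constraints ?T. \<phi> s1 - \<phi> s2 \<noteq> \<phi> s3 - \<phi> s4)"
    by (intro shrink_product_ball_to_skew_constraints finite_skew_constraints subset_refl)
  then obtain c' r' where cr': "\<forall>t\<in>?T. c' t \<in> P \<and> 0 < r' t \<and> d (c0 t) (c' t) + r' t \<le> r0 t"
    and constraints: "\<forall>\<phi>\<in>product_ball ?T c' r'. \<forall>(s1, s2, s3, s4)\<in>skew_constraints ?T.
                        \<phi> s1 - \<phi> s2 \<noteq> \<phi> s3 - \<phi> s4"
    by blast
  have "c' t \<in> P \<and> 0 < r' t \<and> r' t \<le> (1/2) ^ Suc n" if "t \<in> ?T" for t
  proof -
    have "d (c0 t) (c' t) + r' t \<le> (1/2) ^ Suc n"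
      using cr' that by (simp add: r0_def)
    then have "r' t \<le> (1/2) ^ Suc n"
      using nonneg[of "c0 t" "c' t"] by linarith
    with cr' that show ?thesis
      by simp
  qed
  with constraints have "skew_level (Suc n) c' r'"
    by (simp add: skew_level_def)
  moreover have "d (c s) (c' (s @ [b])) + r' (s @ [b]) \<le> r s / 2" if "length s = n" for s b
    using cr'[rule_format, of "s @ [b]"] that by (simp add: c0_def r0_def)
  ultimately show ?thesis
    by blast
qed

lemma skew_scheme_exists:
  assumes "p \<in> P"
  shows "\<exists>C R. (\<forall>n. skew_level n C R) \<and>
           (\<forall>s b. d (C s) (C (s @ [b])) + R (s @ [b]) \<le> R s / 2)"
proof -
  have "\<exists>f. \<forall>n. skew_level n (fst (f n)) (snd (f n)) \<and>
      (\<forall>s b. length s = n \<longrightarrow>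
         d (fst (f n) s) (fst (f (Suc n)) (s @ [b])) + snd (f (Suc n)) (s @ [b]) \<le> snd (f n) s / 2)"
  proof (rule dependent_nat_choice)
    show "\<exists>cr. skew_level 0 (fst cr) (snd cr)"
      using skew_level_0[OF assms] by (intro exI[of _ "(\<lambda>_. p, \<lambda>_. 1)"]) simp
  next
    fix cr n assume "skew_level n (fst cr) (snd cr)"
    then obtain c' r' where "skew_level (Suc n) c' r'"
      and "\<forall>s b. length s = n \<longrightarrow> d (fst cr s) (c' (s @ [b])) + r' (s @ [b]) \<le> snd cr s / 2"
      using skew_level_Suc by blast
    then show "\<exists>cr'. skew_level (Suc n) (fst cr') (snd cr') \<and>
        (\<forall>s b. length s = n \<longrightarrow> d (fst cr s) (fst cr' (s @ [b])) + snd cr' (s @ [b]) \<le> snd cr s / 2)"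
      by (intro exI[of _ "(c', r')"]) simp
  qed
  then obtain f where f: "\<forall>n. skew_level n (fst (f n)) (snd (f n)) \<and>
      (\<forall>s b. length s = n \<longrightarrow>
         d (fst (f n) s) (fst (f (Suc n)) (s @ [b])) + snd (f (Suc n)) (s @ [b]) \<le> snd (f n) s / 2)"
    by blast
  define C where "C s = fst (f (length s)) s" for s
  define R where "R s = snd (f (length s)) s" for s
  have "skew_level n C R" for n
    using f skew_level_cong[of n C "fst (f n)" R "snd (f n)"] by (simp add: C_def R_def)
  moreover have "d (C s) (C (s @ [b])) + R (s @ [b]) \<le> R s / 2" for s b
    using f by (simp add: C_def R_def)
  ultimately show ?thesis
    by blast
qed

end

locale skew_scheme = perfect_subset_complete_metric_group d P
  for d :: "'a::{topological_space, group_add} \<Rightarrow> 'a \<Rightarrow> real" and P +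
  fixes C :: "bool list \<Rightarrow> 'a" and R :: "bool list \<Rightarrow> real"
  assumes skew_level_scheme: "skew_level n C R"
    and scheme_refines: "d (C s) (C (s @ [b])) + R (s @ [b]) \<le> R s / 2"
begin

lemma C_in_P: "C s \<in> P" and R_pos: "0 < R s" and R_le: "R s \<le> (1/2) ^ length s"
  using skew_level_scheme[of "length s"] by (auto simp: skew_level_def)

text \<open>Halving the radius puts each closed cell inside the open ball controlled by \<open>skew_level\<close>.\<close>
definition cell :: "bool list \<Rightarrow> 'a set" where
  "cell s = P \<inter> mcball (C s) (R s / 2)"

lemma center_in_cell: "C s \<in> cell s"
  using C_in_P R_pos[of s] by (simp add: cell_def)

lemma closed_cell: "closed (cell s)"
  using closedin_mcball[of "C s" "R s / 2"] closed_P
  by (simp add: cell_def mtopology_eq_euclidean closed_Int)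

lemma cell_snoc_subset: "cell (s @ [b]) \<subseteq> cell s"
proof
  fix z assume z: "z \<in> cell (s @ [b])"
  have "d (C s) z \<le> d (C s) (C (s @ [b])) + d (C (s @ [b])) z"
    by (simp add: triangle)
  also have "\<dots> \<le> R s / 2"
    using z scheme_refines[of s b] R_pos[of "s @ [b]"] by (simp add: cell_def)
  finally show "z \<in> cell s"
    using z by (simp add: cell_def)
qed

lemma cell_append_subset: "cell (s @ u) \<subseteq> cell s"
proof (induction u rule: rev_induct)
  case (snoc b u)
  then show ?case
    using cell_snoc_subset[of "s @ u" b] by simp
qed simp

lemma dist_le_in_cell: "a \<in> cell s \<Longrightarrow> b \<in> cell s \<Longrightarrow> d a b \<le> (1/2) ^ length s"
  using triangle[of a "C s" b] commute[of a "C s"] R_le[of s] by (simp add: cell_def)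

lemma cell_selection_in_product_ball:
  assumes "\<forall>t. length t = n \<longrightarrow> \<psi> t \<in> cell t"
  shows "\<psi> \<in> product_ball {t. length t = n} C R"
  unfolding product_ball_def
proof (intro CollectI ballI conjI)
  fix t :: "bool list" assume "t \<in> {t. length t = n}"
  then have "\<psi> t \<in> P" "d (C t) (\<psi> t) \<le> R t / 2"
    using assms by (auto simp: cell_def)
  then show "\<psi> t \<in> P" "d (C t) (\<psi> t) < R t"
    using R_pos[of t] by auto
qed

lemma cell_selection_inj_skew:
  assumes "\<forall>t. length t = n \<longrightarrow> \<psi> t \<in> cell t"
  shows "inj_on \<psi> {t. length t = n} \<and> skew (\<psi> ` {t. length t = n})"
  using skew_level_scheme[of n] cell_selection_in_product_ball[OF assms]
  by (intro skew_constraints_imp_inj_skew) (simp add: skew_level_def)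

lemma cells_disjoint:
  assumes "length s = length s'" "s \<noteq> s'"
  shows "cell s \<inter> cell s' = {}"
proof (rule ccontr)
  assume "cell s \<inter> cell s' \<noteq> {}"
  then obtain z where "z \<in> cell s" "z \<in> cell s'"
    by blast
  then have "\<forall>t. length t = length s \<longrightarrow> (C(s := z, s' := z)) t \<in> cell t"
    by (simp add: center_in_cell)
  then have "inj_on (C(s := z, s' := z)) {t. length t = length s}"
    using cell_selection_inj_skew by blast
  then show False
    using assms by (auto dest: inj_onD[of _ _ s s'])
qed

definition scheme_set :: "'a set" where
  "scheme_set = {x. \<forall>n. \<exists>s. length s = n \<and> x \<in> cell s}"

lemma scheme_set_subset: "scheme_set \<subseteq> P"
  by (auto simp: scheme_set_def cell_def)

lemma closed_scheme_set: "closed scheme_set"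
proof -
  have "scheme_set = (\<Inter>n. \<Union>s\<in>{s. length s = n}. cell s)"
    by (auto simp: scheme_set_def)
  moreover have "finite {s :: bool list. length s = n}" for n
    using finite_lists_length_eq[of "UNIV :: bool set" n] by simp
  ultimately show ?thesis
    by (simp add: closed_INT closed_UN closed_cell)
qed

lemma exists_in_all_cells_along_branch: "\<exists>z. \<forall>k. z \<in> cell (t @ replicate k False)"
proof -
  define G where "G k = cell (t @ replicate k False)" for k
  have "decseq G"
  proof (rule decseq_SucI)
    show "G (Suc k) \<subseteq> G k" for k
      using cell_snoc_subset[of "t @ replicate k False" False]
      by (simp add: G_def replicate_append_same)
  qed
  moreover have "\<exists>k a. G k \<subseteq> mcball a \<epsilon>" if "0 < \<epsilon>" for \<epsilon>
  proof -
    obtain k where k: "(1/2::real) ^ k < \<epsilon>"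
      using real_arch_pow_inv[OF \<open>0 < \<epsilon>\<close>, of "1/2"] by auto
    let ?s = "t @ replicate k False"
    have "(1/2::real) ^ length ?s \<le> (1/2) ^ k"
      by (rule power_decreasing) auto
    then have "R ?s < \<epsilon>"
      using R_le[of ?s] k by linarith
    then have "G k \<subseteq> mcball (C ?s) \<epsilon>"
      using R_pos[of ?s] by (auto simp: G_def cell_def)
    then show ?thesis
      by blast
  qed
  moreover have "closedin mtopology (G k)" "G k \<noteq> {}" for k
    using closed_cell center_in_cell by (auto simp: G_def mtopology_eq_euclidean)
  ultimately have "\<Inter> (range G) \<noteq> {}"
    by (intro mcomplete_UNIV[unfolded mcomplete_nest, rule_format]) auto
  then show ?thesis
    by (auto simp: G_def)
qed

lemma scheme_set_meets_cell: "\<exists>z\<in>scheme_set. z \<in> cell t"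
proof -
  obtain z where z: "\<And>k. z \<in> cell (t @ replicate k False)"
    using exists_in_all_cells_along_branch by blast
  have "z \<in> cell (take n (t @ replicate n False))" for n
    using z[of n]
      cell_append_subset[of "take n (t @ replicate n False)" "drop n (t @ replicate n False)"]
    unfolding append_take_drop_id by blast
  moreover have "length (take n (t @ replicate n False)) = n" for n
    by simp
  ultimately have "z \<in> scheme_set"
    unfolding scheme_set_def by blast
  with z[of 0] show ?thesis
    by auto
qed

lemma scheme_set_nonempty: "scheme_set \<noteq> {}"
  using scheme_set_meets_cell by blast

lemma islimpt_scheme_set:
  assumes "x \<in> scheme_set"
  shows "x islimpt scheme_set"
proof (rule islimptI)
  fix U assume "x \<in> U" "open U"
  then have "\<forall>\<^sub>F y in nhds x. y \<in> U"
    by (simp add: eventually_nhds_in_open)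
  then obtain r where "0 < r" and r: "\<And>y. d x y < r \<Longrightarrow> y \<in> U"
    by (auto simp: eventually_nhds_iff_ball)
  obtain n where n: "(1/2::real) ^ n < r"
    using real_arch_pow_inv[OF \<open>0 < r\<close>, of "1/2"] by auto
  obtain u where "length u = Suc n" "x \<in> cell u"
    using assms by (auto simp: scheme_set_def)
  then obtain s b where u: "u = s @ [b]" and "length s = n"
    by (auto simp: length_Suc_conv_rev)
  obtain y where "y \<in> scheme_set" "y \<in> cell (s @ [\<not> b])"
    using scheme_set_meets_cell by blast
  moreover have "y \<noteq> x"
    using cells_disjoint[of "s @ [\<not> b]" u] \<open>x \<in> cell u\<close> \<open>y \<in> cell (s @ [\<not> b])\<close> u by auto
  moreover have "d x y \<le> (1/2) ^ n"
    using dist_le_in_cell cell_snoc_subset \<open>x \<in> cell u\<close> \<open>y \<in> cell (s @ [\<not> b])\<close> u \<open>length s = n\<close>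
    by blast
  ultimately show "\<exists>y\<in>scheme_set. y \<in> U \<and> y \<noteq> x"
    using n r by force
qed

lemma perfect_scheme_set: "perfect_set scheme_set"
  using closed_scheme_set islimpt_scheme_set by (simp add: perfect_set_def)

lemma finite_subset_scheme_set_in_cell_selection:
  assumes "finite S" "S \<subseteq> scheme_set"
  shows "\<exists>n \<psi>. (\<forall>t. length t = n \<longrightarrow> \<psi> t \<in> cell t) \<and> S \<subseteq> \<psi> ` {t. length t = n}"
proof -
  obtain n where sep: "\<forall>a\<in>S. \<forall>b\<in>S. a \<noteq> b \<longrightarrow> (1/2::real) ^ n < d a b"
    using eventually_happens'[OF sequentially_bot eventually_separated_by_powers[OF assms(1)]]
    by auto
  have "\<forall>a\<in>S. \<exists>s. length s = n \<and> a \<in> cell s"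
    using assms(2) by (auto simp: scheme_set_def)
  then obtain \<sigma> where \<sigma>: "\<And>a. a \<in> S \<Longrightarrow> length (\<sigma> a) = n \<and> a \<in> cell (\<sigma> a)"
    by metis
  have "inj_on \<sigma> S"
  proof (rule inj_onI, rule ccontr)
    fix a b assume "a \<in> S" "b \<in> S" "\<sigma> a = \<sigma> b" "a \<noteq> b"
    then have "d a b \<le> (1/2) ^ n"
      using \<sigma> dist_le_in_cell by metis
    moreover have "(1/2) ^ n < d a b"
      using sep \<open>a \<in> S\<close> \<open>b \<in> S\<close> \<open>a \<noteq> b\<close> by blast
    ultimately show False
      by linarith
  qed
  define \<psi> where "\<psi> t = (if t \<in> \<sigma> ` S then inv_into S \<sigma> t else C t)" for t
  have \<psi>\<sigma>: "\<psi> (\<sigma> a) = a" if "a \<in> S" for a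
    using that \<open>inj_on \<sigma> S\<close> by (simp add: \<psi>_def)
  have "\<psi> t \<in> cell t" for t
  proof (cases "t \<in> \<sigma> ` S")
    case True
    then show ?thesis
      using \<psi>\<sigma> \<sigma> by auto
  qed (simp add: \<psi>_def center_in_cell)
  moreover have "S \<subseteq> \<psi> ` {t. length t = n}"
  proof
    fix a assume "a \<in> S"
    then show "a \<in> \<psi> ` {t. length t = n}"
      using \<psi>\<sigma> \<sigma> by (intro rev_image_eqI[of "\<sigma> a"]) auto
  qed
  ultimately show ?thesis
    by blast
qed

lemma skew_scheme_set: "skew scheme_set"
  unfolding skew_def
proof (intro ballI impI)
  fix x y v w assume "x \<in> scheme_set" "y \<in> scheme_set" "v \<in> scheme_set" "w \<in> scheme_set"
    and pairs: "x \<noteq> y \<and> v \<noteq> w \<and> {x, y} \<noteq> {v, w}"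
  then have "{x, y, v, w} \<subseteq> scheme_set"
    by simp
  then obtain n \<psi> where selection: "\<forall>t. length t = n \<longrightarrow> \<psi> t \<in> cell t"
      and covers: "{x, y, v, w} \<subseteq> \<psi> ` {t. length t = n}"
    using finite_subset_scheme_set_in_cell_selection[of "{x, y, v, w}"] by blast
  have "skew (\<psi> ` {t. length t = n})"
    using cell_selection_inj_skew[OF selection] by simp
  then show "x - y \<noteq> v - w"
    by (rule skewD) (use covers pairs in auto)
qed

end

theorem lemma3p4:
  fixes P :: "'a::{topological_space, group_add} set"
  assumes "polish_group TYPE('a)"
    and "perfect_set P"
  shows "\<exists>Q. Q \<subseteq> P \<and> perfect_set Q \<and> skew Q \<and> (P \<noteq> {} \<longrightarrow> Q \<noteq> {})"
proof (cases "P = {}")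
  case True
  then show ?thesis
    by (intro exI[of _ "{}"]) (simp add: perfect_set_def skew_def)
next
  case False
  obtain d :: "'a \<Rightarrow> 'a \<Rightarrow> real" where "complete_metric_group d"
    using polish_group_complete_metric_group[OF assms(1)] by blast
  with assms(2) have perfect: "perfect_subset_complete_metric_group d P"
    by (simp add: perfect_subset_complete_metric_group_def
        perfect_subset_complete_metric_group_axioms_def)
  then interpret perfect_subset_complete_metric_group d P .
  obtain C R where "\<forall>n. skew_level n C R" "\<forall>s b. d (C s) (C (s @ [b])) + R (s @ [b]) \<le> R s / 2"
    using skew_scheme_exists False by blast
  with perfect interpret skew_scheme d P C R
    by (simp add: skew_scheme_def skew_scheme_axioms_def)
  show ?thesis
    using scheme_set_subset perfect_scheme_set skew_scheme_set scheme_set_nonempty by blast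
qed

end
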